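(* Let $X$ be a locally compact, Hausdorff, second countable space. Then $(\Gamma(X),\tau_{co})$ is a second countable space.
   Context: $\Gamma(X)$ denotes the set of all homeomorphisms $f:\mathrm{dom}(f)\to\mathrm{im}(f)$ between open subsets $\mathrm{dom}(f),\mathrm{im}(f)$ of $X$ (including the empty function $\emptyset$); it is an inverse semigroup under partial composition. The topology $\tau_{co}$ on $\Gamma(X)$ is the topology generated by the subbasic sets $\langle K,V\rangle=\{f\in\Gamma(X): K\subseteq\mathrm{dom}(f)\text{ and } f(K)\subseteq V\}$, where $K$ ranges over compact subsets of $X$ and $V$ over open subsets of $X$. *)

theory Defs
  imports "HOL-Analysis.Analysis"
begin

text \<open>Partial maps on the carrier of X are represented as Isabelle maps 'a \<Rightarrow> 'a option.
  Gamma X is the set of homeomorphisms between open subsets of X.\<close>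

definition Gamma :: "'a topology \<Rightarrow> ('a \<Rightarrow> 'a option) set" where
  "Gamma X = {f. openin X (dom f) \<and> openin X (ran f) \<and>
      homeomorphic_map (subtopology X (dom f)) (subtopology X (ran f)) (\<lambda>x. the (f x))}"

definition co_subbasic :: "'a topology \<Rightarrow> 'a set \<Rightarrow> 'a set \<Rightarrow> ('a \<Rightarrow> 'a option) set" where
  "co_subbasic X K V = {f \<in> Gamma X. K \<subseteq> dom f \<and> (\<lambda>x. the (f x)) ` K \<subseteq> V}"

definition tau_co :: "'a topology \<Rightarrow> ('a \<Rightarrow> 'a option) topology" where
  "tau_co X = subtopology
     (topology_generated_by {co_subbasic X K V | K V. compactin X K \<and> openin X V})
     (Gamma X)"

end

theory Submission
  imports Defs
begin

text \<open>Fix a countable base \<open>\<B>\<close> of \<open>X\<close>. The countably many sets \<open>\<langle>cl B, B'\<rangle>\<close> with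
  \<open>B, B' \<in> \<B>\<close> and \<open>cl B\<close> compact already generate \<open>\<tau>\<^sub>c\<^sub>o\<close>: if \<open>f \<in> \<langle>K, V\<rangle>\<close>, then by
  continuity of \<open>f\<close> and local compactness every \<open>x \<in> K\<close> lies in some \<open>B \<in> \<B>\<close> with compact
  closure mapped by \<open>f\<close> into some \<open>B' \<in> \<B>\<close> with \<open>B' \<subseteq> V\<close>; finitely many such \<open>B\<close> cover \<open>K\<close>,
  and the intersection of the corresponding \<open>\<langle>cl B, B'\<rangle>\<close> is a neighbourhood of \<open>f\<close> inside
  \<open>\<langle>K, V\<rangle>\<close>. Finite intersections of a countable subbasis form a countable base.\<close>

lemma generate_topology_on_refined_by_finite_Inter:
  assumes "generate_topology_on \<S> U" and "x \<in> U"
    and refine: "\<And>S x. S \<in> \<S> \<Longrightarrow> x \<in> S \<Longrightarrow>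
      \<exists>\<F>. finite \<F> \<and> \<F> \<subseteq> \<C> \<and> x \<in> \<Inter>\<F> \<and> \<Union>\<S> \<inter> \<Inter>\<F> \<subseteq> S"
  shows "\<exists>\<F>. finite \<F> \<and> \<F> \<subseteq> \<C> \<and> x \<in> \<Inter>\<F> \<and> \<Union>\<S> \<inter> \<Inter>\<F> \<subseteq> U"
  using assms(1,2)
proof (induction arbitrary: x)
  case Empty
  then show ?case by simp
next
  case (Int a b)
  then have "x \<in> a" and "x \<in> b" by simp_all
  obtain \<F>a where "finite \<F>a" "\<F>a \<subseteq> \<C>" "x \<in> \<Inter>\<F>a" "\<Union>\<S> \<inter> \<Inter>\<F>a \<subseteq> a"
    using Int.IH(1)[OF \<open>x \<in> a\<close>] by blast
  moreover obtain \<F>b where "finite \<F>b" "\<F>b \<subseteq> \<C>" "x \<in> \<Inter>\<F>b" "\<Union>\<S> \<inter> \<Inter>\<F>b \<subseteq> b"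
    using Int.IH(2)[OF \<open>x \<in> b\<close>] by blast
  ultimately show ?case
    by (intro exI[of _ "\<F>a \<union> \<F>b"]) auto
next
  case (UN K)
  obtain k where "k \<in> K" "x \<in> k"
    using UN.prems by (rule UnionE)
  obtain \<F> where "finite \<F>" "\<F> \<subseteq> \<C>" "x \<in> \<Inter>\<F>" "\<Union>\<S> \<inter> \<Inter>\<F> \<subseteq> k"
    using UN.IH[OF \<open>k \<in> K\<close> \<open>x \<in> k\<close>] by blast
  with \<open>k \<in> K\<close> show ?case
    by (meson Union_upper order_trans)
next
  case (Basis s)
  then show ?case using refine by blast
qed

lemma second_countable_topology_generated_by:
  assumes "countable \<C>" and "\<C> \<subseteq> \<S>"
    and refine: "\<And>S x. S \<in> \<S> \<Longrightarrow> x \<in> S \<Longrightarrow>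
      \<exists>\<F>. finite \<F> \<and> \<F> \<subseteq> \<C> \<and> x \<in> \<Inter>\<F> \<and> \<Union>\<S> \<inter> \<Inter>\<F> \<subseteq> S"
  shows "second_countable (topology_generated_by \<S>)"
  unfolding second_countable_def
proof (intro exI conjI ballI allI impI)
  let ?\<B> = "(\<lambda>\<F>. \<Union>\<S> \<inter> \<Inter>\<F>) ` {\<F>. finite \<F> \<and> \<F> \<subseteq> \<C>}"
  show "countable ?\<B>"
    using \<open>countable \<C>\<close> by (intro countable_image countable_Collect_finite_subset)
  show "openin (topology_generated_by \<S>) V" if "V \<in> ?\<B>" for V
  proof -
    obtain \<F> where "finite \<F>" "\<F> \<subseteq> \<S>" and V: "V = \<Union>\<S> \<inter> \<Inter>\<F>"
      using \<open>V \<in> ?\<B>\<close> \<open>\<C> \<subseteq> \<S>\<close> by blast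
    have "openin (topology_generated_by \<S>) (\<Union>\<S>)"
      using openin_topspace[of "topology_generated_by \<S>"] by simp
    then show ?thesis
      unfolding V using \<open>finite \<F>\<close> \<open>\<F> \<subseteq> \<S>\<close>
      by (intro openin_Int_Inter) (auto intro: topology_generated_by_Basis)
  qed
  fix U x
  assume "openin (topology_generated_by \<S>) U \<and> x \<in> U"
  then have "generate_topology_on \<S> U" and "x \<in> U" and "x \<in> \<Union>\<S>"
    using openin_topology_generated_by_iff openin_subset by fastforce+
  then obtain \<F> where "finite \<F>" "\<F> \<subseteq> \<C>" "x \<in> \<Inter>\<F>" "\<Union>\<S> \<inter> \<Inter>\<F> \<subseteq> U"
    using generate_topology_on_refined_by_finite_Inter[OF _ _ refine] by meson
  moreover have "\<Union>\<S> \<inter> \<Inter>\<F> \<in> ?\<B>"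
    using \<open>finite \<F>\<close> \<open>\<F> \<subseteq> \<C>\<close> by (intro imageI) simp
  ultimately show "\<exists>V\<in>?\<B>. x \<in> V \<and> V \<subseteq> U"
    using \<open>x \<in> \<Union>\<S>\<close> by (intro bexI[of _ "\<Union>\<S> \<inter> \<Inter>\<F>"]) simp_all
qed

lemma locally_compact_Hausdorff_base_compact_closure:
  assumes "locally_compact_space X" and "Hausdorff_space X"
    and base: "\<And>U x. openin X U \<Longrightarrow> x \<in> U \<Longrightarrow> \<exists>W\<in>\<B>. x \<in> W \<and> W \<subseteq> U"
    and "openin X U" and "x \<in> U"
  shows "\<exists>W\<in>\<B>. x \<in> W \<and> compactin X (X closure_of W) \<and> X closure_of W \<subseteq> U"
proof -
  have "neighbourhood_base_of (\<lambda>C. compactin X C \<and> closedin X C) X"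
    using assms locally_compact_Hausdorff_imp_regular_space
      locally_compact_regular_space_neighbourhood_base by blast
  then obtain N M where "openin X N" "x \<in> N" "N \<subseteq> M" "M \<subseteq> U"
    and "compactin X M" "closedin X M"
    using \<open>openin X U\<close> \<open>x \<in> U\<close> unfolding neighbourhood_base_of by metis
  moreover obtain W where "W \<in> \<B>" "x \<in> W" "W \<subseteq> N"
    using base[OF \<open>openin X N\<close> \<open>x \<in> N\<close>] by blast
  ultimately have "X closure_of W \<subseteq> M"
    by (meson closure_of_minimal order_trans)
  with \<open>compactin X M\<close> \<open>W \<in> \<B>\<close> \<open>x \<in> W\<close> \<open>M \<subseteq> U\<close> show ?thesis
    using closed_compactin by (metis closedin_closure_of order_trans)
qed

lemma openin_Gamma_preimage:
  assumes "f \<in> Gamma X" and "openin X V"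
  shows "openin X {x \<in> dom f. the (f x) \<in> V}"
proof -
  have "openin X (dom f)"
    and cont: "continuous_map (subtopology X (dom f)) X (\<lambda>x. the (f x))"
    using assms(1) homeomorphic_imp_continuous_map continuous_map_into_fulltopology
    unfolding Gamma_def by blast+
  have "openin (subtopology X (dom f))
      {x \<in> topspace (subtopology X (dom f)). the (f x) \<in> V}"
    using openin_continuous_map_preimage[OF cont \<open>openin X V\<close>] .
  moreover have "topspace (subtopology X (dom f)) = dom f"
    using openin_subset[OF \<open>openin X (dom f)\<close>] by auto
  ultimately show ?thesis
    using openin_trans_full \<open>openin X (dom f)\<close> by fastforce
qed

lemma Gamma_Inter_co_subbasic_subset:
  assumes "K \<subseteq> (\<Union>i\<in>I. L i)" and "\<And>i. i \<in> I \<Longrightarrow> W i \<subseteq> V"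
  shows "Gamma X \<inter> (\<Inter>i\<in>I. co_subbasic X (L i) (W i)) \<subseteq> co_subbasic X K V"
proof
  fix h
  assume "h \<in> Gamma X \<inter> (\<Inter>i\<in>I. co_subbasic X (L i) (W i))"
  then have "h \<in> Gamma X"
    and h: "\<And>i. i \<in> I \<Longrightarrow> L i \<subseteq> dom h \<and> (\<lambda>x. the (h x)) ` L i \<subseteq> W i"
    unfolding co_subbasic_def by auto
  have "y \<in> dom h \<and> the (h y) \<in> V" if "y \<in> K" for y
  proof -
    obtain i where "i \<in> I" "y \<in> L i"
      using assms(1) \<open>y \<in> K\<close> by blast
    then show ?thesis
      using h[OF \<open>i \<in> I\<close>] assms(2)[OF \<open>i \<in> I\<close>] by blast
  qed
  then show "h \<in> co_subbasic X K V"
    using \<open>h \<in> Gamma X\<close> unfolding co_subbasic_def by blast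
qed

definition co_subbasis :: "'a topology \<Rightarrow> ('a \<Rightarrow> 'a option) set set" where
  "co_subbasis X = {co_subbasic X K V | K V. compactin X K \<and> openin X V}"

lemma Union_co_subbasis [simp]: "\<Union>(co_subbasis X) = Gamma X"
proof
  show "\<Union>(co_subbasis X) \<subseteq> Gamma X"
    unfolding co_subbasis_def co_subbasic_def by blast
  have "co_subbasic X {} {} = Gamma X"
    unfolding co_subbasic_def by blast
  then show "Gamma X \<subseteq> \<Union>(co_subbasis X)"
    unfolding co_subbasis_def by force
qed

definition co_subbasis_of_base :: "'a topology \<Rightarrow> 'a set set \<Rightarrow> ('a \<Rightarrow> 'a option) set set" where
  "co_subbasis_of_base X \<B> =
     {co_subbasic X (X closure_of B) B' | B B'. B \<in> \<B> \<and> B' \<in> \<B> \<and> compactin X (X closure_of B)}"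

lemma countable_co_subbasis_of_base:
  assumes "countable \<B>"
  shows "countable (co_subbasis_of_base X \<B>)"
proof -
  have "co_subbasis_of_base X \<B> \<subseteq>
      (\<lambda>(B, B'). co_subbasic X (X closure_of B) B') ` (\<B> \<times> \<B>)"
    unfolding co_subbasis_of_base_def by auto
  moreover have "countable ((\<lambda>(B, B'). co_subbasic X (X closure_of B) B') ` (\<B> \<times> \<B>))"
    using assms by auto
  ultimately show ?thesis
    by (rule countable_subset)
qed

lemma co_subbasis_of_base_subset:
  assumes "\<And>B. B \<in> \<B> \<Longrightarrow> openin X B"
  shows "co_subbasis_of_base X \<B> \<subseteq> co_subbasis X"
  using assms unfolding co_subbasis_of_base_def co_subbasis_def by blast

lemma co_subbasic_refined_by_co_subbasis_of_base:
  assumes "locally_compact_space X" and "Hausdorff_space X"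
    and open_base: "\<And>B. B \<in> \<B> \<Longrightarrow> openin X B"
    and base: "\<And>U x. openin X U \<Longrightarrow> x \<in> U \<Longrightarrow> \<exists>W\<in>\<B>. x \<in> W \<and> W \<subseteq> U"
    and f: "f \<in> co_subbasic X K V" and "compactin X K" and "openin X V"
  shows "\<exists>\<F>. finite \<F> \<and> \<F> \<subseteq> co_subbasis_of_base X \<B> \<and> f \<in> \<Inter>\<F> \<and>
    Gamma X \<inter> \<Inter>\<F> \<subseteq> co_subbasic X K V"
proof -
  have "f \<in> Gamma X" and "K \<subseteq> dom f" and fK: "(\<lambda>x. the (f x)) ` K \<subseteq> V"
    using f unfolding co_subbasic_def by auto
  have "\<exists>B B'. B \<in> \<B> \<and> B' \<in> \<B> \<and> B' \<subseteq> V \<and> x \<in> B \<and> compactin X (X closure_of B) \<and>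
      f \<in> co_subbasic X (X closure_of B) B'" if "x \<in> K" for x
  proof -
    have "the (f x) \<in> V"
      using fK \<open>x \<in> K\<close> by blast
    then obtain B' where "B' \<in> \<B>" "the (f x) \<in> B'" "B' \<subseteq> V"
      using base[OF \<open>openin X V\<close>] by blast
    have "openin X {y \<in> dom f. the (f y) \<in> B'}"
      using openin_Gamma_preimage[OF \<open>f \<in> Gamma X\<close> open_base[OF \<open>B' \<in> \<B>\<close>]] .
    moreover have "x \<in> {y \<in> dom f. the (f y) \<in> B'}"
      using \<open>x \<in> K\<close> \<open>K \<subseteq> dom f\<close> \<open>the (f x) \<in> B'\<close> by blast
    ultimately obtain B where "B \<in> \<B>" "x \<in> B" "compactin X (X closure_of B)"
      and "X closure_of B \<subseteq> {y \<in> dom f. the (f y) \<in> B'}"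
      using locally_compact_Hausdorff_base_compact_closure[OF assms(1,2) base] by meson
    with \<open>B' \<in> \<B>\<close> \<open>B' \<subseteq> V\<close> \<open>f \<in> Gamma X\<close> show ?thesis
      unfolding co_subbasic_def by blast
  qed
  then obtain b b' where b: "\<And>x. x \<in> K \<Longrightarrow> b x \<in> \<B> \<and> b' x \<in> \<B> \<and> b' x \<subseteq> V \<and> x \<in> b x \<and>
      compactin X (X closure_of b x) \<and> f \<in> co_subbasic X (X closure_of b x) (b' x)"
    by metis
  have "\<exists>\<T>. finite \<T> \<and> \<T> \<subseteq> b ` K \<and> K \<subseteq> \<Union>\<T>"
    by (rule compactinD[OF \<open>compactin X K\<close>]) (use b open_base in auto)
  then obtain T where "finite T" "T \<subseteq> K" and cover: "K \<subseteq> (\<Union>x\<in>T. b x)"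
    by (metis finite_subset_image)
  have "b x \<subseteq> X closure_of b x" if "x \<in> K" for x
    using b[OF that] open_base by (meson closure_of_subset openin_subset)
  with cover \<open>T \<subseteq> K\<close> have "K \<subseteq> (\<Union>x\<in>T. X closure_of b x)"
    by blast
  then have "Gamma X \<inter> (\<Inter>x\<in>T. co_subbasic X (X closure_of b x) (b' x)) \<subseteq> co_subbasic X K V"
    using \<open>T \<subseteq> K\<close> b by (intro Gamma_Inter_co_subbasic_subset) auto
  moreover have "(\<lambda>x. co_subbasic X (X closure_of b x) (b' x)) ` T \<subseteq> co_subbasis_of_base X \<B>"
    using \<open>T \<subseteq> K\<close> b unfolding co_subbasis_of_base_def by blast
  ultimately show ?thesis
    using \<open>finite T\<close> \<open>T \<subseteq> K\<close> b
    by (intro exI[of _ "(\<lambda>x. co_subbasic X (X closure_of b x) (b' x)) ` T"]) auto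
qed

theorem mainTheorem1:
  fixes X :: "'a topology"
  assumes "locally_compact_space X" and "Hausdorff_space X" and "second_countable X"
  shows "second_countable (tau_co X)"
proof -
  obtain \<B> where "countable \<B>" and open_base: "\<And>B. B \<in> \<B> \<Longrightarrow> openin X B"
    and base: "\<And>U x. openin X U \<Longrightarrow> x \<in> U \<Longrightarrow> \<exists>W\<in>\<B>. x \<in> W \<and> W \<subseteq> U"
    using \<open>second_countable X\<close> unfolding second_countable_def by metis
  have "second_countable (topology_generated_by (co_subbasis X))"
  proof (rule second_countable_topology_generated_by)
    show "countable (co_subbasis_of_base X \<B>)"
      using \<open>countable \<B>\<close> by (rule countable_co_subbasis_of_base)
    show "co_subbasis_of_base X \<B> \<subseteq> co_subbasis X"
      using open_base by (rule co_subbasis_of_base_subset)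
    fix S f
    assume "S \<in> co_subbasis X" and "f \<in> S"
    then obtain K V where "S = co_subbasic X K V" "compactin X K" "openin X V"
      unfolding co_subbasis_def by blast
    with \<open>f \<in> S\<close> show "\<exists>\<F>. finite \<F> \<and> \<F> \<subseteq> co_subbasis_of_base X \<B> \<and> f \<in> \<Inter>\<F> \<and>
        \<Union>(co_subbasis X) \<inter> \<Inter>\<F> \<subseteq> S"
      using co_subbasic_refined_by_co_subbasis_of_base[OF assms(1,2) open_base base]
      by simp
  qed
  then show ?thesis
    unfolding tau_co_def co_subbasis_def[symmetric] by (rule second_countable_subtopology)
qed

end
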